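(* Let $\mathbb X$ be a basic space and $\mathcal D=(D,<,\rho)$ a computable partially ordered set. 1. Every $F\in\mathrm{Max}_{\mathrm{PR}}[\mathbb X\to\mathcal D]$ is of the form $F=\max^{\mathcal D}f$ for some partial computable $f:\mathbb X\times\mathbb N\to D$, monotone increasing in its second argument, such that $\mathrm{dom}(f)=Z\times\mathbb N$ for some $\Sigma^0_1$ (computably enumerable) set $Z\subseteq\mathbb X$. 2. If moreover $F\in\mathrm{Max}_{\mathrm{PR}}[\mathbb X\to\mathcal D]$ has $\Sigma^0_1$ domain, then one can take $Z=\mathrm{dom}(F)$.
   Context: A basic space is a finite non-empty product of sets each of which is $\mathbb N$, $\mathbb Z$, or $A^*$ for some finite alphabet $A$. A computable partially ordered set is a triple $\mathcal D=(D,<,\rho)$ where $\rho:\mathbb N\to D$ is a bijection and $<$ is a strict partial order on $D$ with $\{(m,n):\rho(m)<\rho(n)\}$ computable; a partial function into $D$ is partial computable if its composition with $\rho^{-1}$ is. For a partial $f:\mathbb X\times\mathbb N\to D$ monotone increasing in its second argument on its domain, $\max^{\mathcal D}f$ is the partial function defined exactly at those $x$ for which $\{f(x,t):t,\ f(x,t)\text{ defined}\}$ is finite and non-empty, with value its maximum element. $\mathrm{Max}_{\mathrm{PR}}[\mathbb X\to\mathcal D]$ is the class of all $\max^{\mathcal D}f$ with $f$ partial computable and monotone increasing in its second argument. *)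

theory Defs
  imports Main "HOL-Library.Nat_Bijection"
begin

datatype recf = Zero | Succ | Proj nat | Comp recf "recf list" | Prim recf recf | Mini recf

inductive eval :: "recf \<Rightarrow> nat list \<Rightarrow> nat \<Rightarrow> bool" where
  zero: "eval Zero xs 0"
| succ: "eval Succ (x # xs) (Suc x)"
| proj: "i < length xs \<Longrightarrow> eval (Proj i) xs (xs ! i)"
| comp: "list_all2 (\<lambda>g y. eval g xs y) gs ys \<Longrightarrow> eval f ys z \<Longrightarrow> eval (Comp f gs) xs z"
| prim0: "eval g xs z \<Longrightarrow> eval (Prim g h) (0 # xs) z"
| primS: "eval (Prim g h) (n # xs) y \<Longrightarrow> eval h (n # y # xs) z \<Longrightarrow> eval (Prim g h) (Suc n # xs) z"
| mini: "eval f (n # xs) 0 \<Longrightarrow> (\<forall>m<n. \<exists>y>0. eval f (m # xs) y) \<Longrightarrow> eval (Mini f) xs n"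

text \<open>Descriptors: N, Z, A* with A = {0..<k}, and (nested binary) products.\<close>
datatype bspace = SN | SZ | SW nat | SProd bspace bspace

datatype val = VN nat | VZ int | VW "nat list" | VP val val

fun elems :: "bspace \<Rightarrow> val set" where
  "elems SN = range VN"
| "elems SZ = range VZ"
| "elems (SW k) = VW ` {w. set w \<subseteq> {..<k}}"
| "elems (SProd a b) = {VP x y | x y. x \<in> elems a \<and> y \<in> elems b}"

fun enc :: "val \<Rightarrow> nat" where
  "enc (VN n) = n"
| "enc (VZ i) = int_encode i"
| "enc (VW w) = list_encode w"
| "enc (VP x y) = prod_encode (enc x, enc y)"

definition computable_order :: "('d \<Rightarrow> 'd \<Rightarrow> bool) \<Rightarrow> (nat \<Rightarrow> 'd) \<Rightarrow> bool" where
  "computable_order lt \<rho> \<longleftrightarrow>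
     (\<exists>r. \<forall>m n. eval r [prod_encode (m, n)] (if lt (\<rho> m) (\<rho> n) then 1 else 0))"

definition pcomp2 :: "bspace \<Rightarrow> (nat \<Rightarrow> 'd) \<Rightarrow> (val \<Rightarrow> nat \<Rightarrow> 'd option) \<Rightarrow> bool" where
  "pcomp2 X \<rho> f \<longleftrightarrow>
     (\<exists>r. \<forall>x\<in>elems X. \<forall>t y. eval r [enc (VP x (VN t))] y \<longleftrightarrow> f x t = Some (\<rho> y))"

definition sigma01 :: "bspace \<Rightarrow> val set \<Rightarrow> bool" where
  "sigma01 X Z \<longleftrightarrow> Z \<subseteq> elems X \<and>
     (\<exists>r. \<forall>x\<in>elems X. x \<in> Z \<longleftrightarrow> (\<exists>y. eval r [enc x] y))"

definition mono2 :: "bspace \<Rightarrow> ('d \<Rightarrow> 'd \<Rightarrow> bool) \<Rightarrow> (val \<Rightarrow> nat \<Rightarrow> 'd option) \<Rightarrow> bool" where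
  "mono2 X lt f \<longleftrightarrow> (\<forall>x\<in>elems X. \<forall>s t a b. s \<le> t \<longrightarrow> f x s = Some a \<longrightarrow> f x t = Some b
       \<longrightarrow> (a = b \<or> lt a b))"

definition maxD :: "('d \<Rightarrow> 'd \<Rightarrow> bool) \<Rightarrow> (val \<Rightarrow> nat \<Rightarrow> 'd option) \<Rightarrow> val \<Rightarrow> 'd option" where
  "maxD lt f x = (let S = {d. \<exists>t. f x t = Some d} in
     if finite S \<and> S \<noteq> {} then Some (THE m. m \<in> S \<and> (\<forall>d\<in>S. d = m \<or> lt d m)) else None)"

definition MaxPR :: "bspace \<Rightarrow> ('d \<Rightarrow> 'd \<Rightarrow> bool) \<Rightarrow> (nat \<Rightarrow> 'd) \<Rightarrow> (val \<Rightarrow> 'd option) \<Rightarrow> bool" where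
  "MaxPR X lt \<rho> F \<longleftrightarrow> (\<exists>f. pcomp2 X \<rho> f \<and> mono2 X lt f \<and> (\<forall>x\<in>elems X. F x = maxD lt f x))"

end

theory Submission
  imports Defs
begin

text \<open>Dovetail the computations of \<open>f\<^sub>0 x 0, f\<^sub>0 x 1, \<dots>\<close>: at stage \<open>K\<close> record the output for the
  largest \<open>s \<le> K\<close> whose computation halts within \<open>K\<close> steps. From the first stage at which anything
  has halted on, these records form a total sequence. Its values are values of \<open>f\<^sub>0 x\<close> met in
  increasing order of \<open>s\<close>, so the sequence is monotone, and every value of \<open>f\<^sub>0 x\<close> is dominated by a
  later record; hence both sequences have the same maximum. The new function is defined exactly on
  \<open>Z \<times> \<nat>\<close> with \<open>Z\<close> the c.e. set of \<open>x\<close> at which \<open>f\<^sub>0 x\<close> is defined somewhere. For the second part,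
  restrict it to the c.e. set \<open>dom F \<subseteq> Z\<close>.\<close>

lemma list_all2_unique:
  assumes "list_all2 (\<lambda>g y. P g y \<and> (\<forall>y'. P g y' \<longrightarrow> y = y')) gs ys"
    and "list_all2 P gs ys'"
  shows "ys = ys'"
  using assms by (induction gs arbitrary: ys ys') (auto simp: list_all2_Cons1)

inductive_cases eval_ZeroE: "eval Zero xs y"
inductive_cases eval_SuccE: "eval Succ xs y"
inductive_cases eval_ProjE: "eval (Proj i) xs y"
inductive_cases eval_CompE: "eval (Comp f gs) xs y"
inductive_cases eval_Prim0E: "eval (Prim g h) (0 # xs) y"
inductive_cases eval_PrimSE: "eval (Prim g h) (Suc n # xs) y"
inductive_cases eval_MiniE: "eval (Mini f) xs y"

lemma eval_deterministic: "eval r xs y \<Longrightarrow> eval r xs y' \<Longrightarrow> y = y'"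
proof (induction arbitrary: y' rule: eval.induct)
  case zero then show ?case by (rule eval_ZeroE) simp
next
  case succ then show ?case by (rule eval_SuccE) simp
next
  case proj from proj.prems show ?case by (rule eval_ProjE) simp
next
  case (comp xs gs ys f z)
  from comp.prems obtain ys' where "list_all2 (\<lambda>g. eval g xs) gs ys'" and "eval f ys' y'"
    by (rule eval_CompE)
  moreover from this(1) have "ys = ys'"
    by (intro list_all2_unique[where P = "\<lambda>g y. eval g xs y"]) (use comp.IH(1) in auto)
  ultimately show ?case using comp.IH(2) by simp
next
  case prim0 then show ?case by (elim eval_Prim0E) simp
next
  case primS then show ?case by (elim eval_PrimSE) simp
next
  case (mini f n xs)
  from mini.prems have zero: "eval f (y' # xs) 0" and pos: "\<forall>m<y'. \<exists>y>0. eval f (m # xs) y"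
    by (auto elim: eval_MiniE)
  have "\<not> n < y'" using pos mini.IH(1) by force
  moreover have "\<not> y' < n" using mini.IH(2) zero by force
  ultimately show ?case by simp
qed

section \<open>Arithmetic and pairing programs\<close>

lemma eval_Comp1: "eval g xs y \<Longrightarrow> eval f [y] z \<Longrightarrow> eval (Comp f [g]) xs z"
  by (rule eval.comp[of _ _ "[y]"]) auto

lemma eval_Comp2:
  "eval g1 xs y1 \<Longrightarrow> eval g2 xs y2 \<Longrightarrow> eval f [y1, y2] z \<Longrightarrow> eval (Comp f [g1, g2]) xs z"
  by (rule eval.comp[of _ _ "[y1, y2]"]) auto

lemma eval_Comp3:
  "eval g1 xs y1 \<Longrightarrow> eval g2 xs y2 \<Longrightarrow> eval g3 xs y3 \<Longrightarrow> eval f [y1, y2, y3] z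
   \<Longrightarrow> eval (Comp f [g1, g2, g3]) xs z"
  by (rule eval.comp[of _ _ "[y1, y2, y3]"]) auto

lemma eval_Comp1_inv: "eval (Comp f [g]) xs y \<Longrightarrow> \<exists>v. eval g xs v \<and> eval f [v] y"
  by (erule eval_CompE) (auto simp: list_all2_Cons1)

lemma eval_Comp_arg: "eval (Comp f gs) xs y \<Longrightarrow> g \<in> set gs \<Longrightarrow> \<exists>v. eval g xs v"
  by (erule eval_CompE) (metis in_set_conv_nth list_all2_conv_all_nth)

lemma eval_Zero': "y = 0 \<Longrightarrow> eval Zero xs y"
  using eval.zero by simp

lemma eval_Proj': "i < length xs \<Longrightarrow> y = xs ! i \<Longrightarrow> eval (Proj i) xs y"
  using eval.proj by simp

lemma eval_Comp_Succ: "eval g xs y \<Longrightarrow> eval (Comp Succ [g]) xs (Suc y)"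
  by (rule eval_Comp1) (auto intro: eval.succ)

lemma eval_Projs_shifted:
  "length pre = c \<Longrightarrow>
   list_all2 (\<lambda>g y. eval g (pre @ ys) y) (map (\<lambda>i. Proj (i + c)) [0..<length ys]) ys"
  unfolding list_all2_conv_all_nth by (auto intro!: eval_Proj' simp: nth_append)

definition "rf_one = Comp Succ [Zero]"
definition "rf_add = Prim (Proj 0) (Comp Succ [Proj 1])"
definition "rf_pred = Prim Zero (Proj 0)"
definition "rf_diff = Comp (Prim (Proj 0) (Comp rf_pred [Proj 1])) [Proj 1, Proj 0]"
definition "rf_if_zero = Prim (Proj 1) (Proj 2)"
definition "rf_triangle = Prim Zero (Comp rf_add [Comp Succ [Proj 0], Proj 1])"
definition "rf_pair = Comp rf_add [Comp rf_triangle [Comp rf_add [Proj 0, Proj 1]], Proj 0]"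

lemma eval_rf_one: "y = 1 \<Longrightarrow> eval rf_one xs y"
  unfolding rf_one_def by (auto intro: eval_Comp_Succ[OF eval.zero, simplified])

lemma eval_rf_add: "z = a + b \<Longrightarrow> eval rf_add [a, b] z"
proof -
  have "eval rf_add [a, b] (a + b)" for a
    unfolding rf_add_def
  proof (induction a)
    case 0 then show ?case using eval.prim0[OF eval_Proj'[of 0 "[b]" b]] by simp
  next
    case (Suc a)
    have "eval (Comp Succ [Proj 1]) [a, a + b, b] (Suc (a + b))"
      by (rule eval_Comp_Succ, rule eval_Proj') auto
    then show ?case using eval.primS[OF Suc] by simp
  qed
  then show "z = a + b \<Longrightarrow> eval rf_add [a, b] z" by simp
qed

lemma eval_rf_pred: "y = a - 1 \<Longrightarrow> eval rf_pred [a] y"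
proof -
  have "eval rf_pred [a] (a - 1)" for a
    unfolding rf_pred_def
  proof (induction a)
    case 0 then show ?case using eval.prim0[OF eval.zero] by simp
  next
    case (Suc a)
    then show ?case by (rule eval.primS) (auto intro: eval_Proj')
  qed
  then show "y = a - 1 \<Longrightarrow> eval rf_pred [a] y" by simp
qed

lemma eval_rf_diff: "z = a - b \<Longrightarrow> eval rf_diff [a, b] z"
proof -
  have "eval (Prim (Proj 0) (Comp rf_pred [Proj 1])) [b, a] (a - b)" for b
  proof (induction b)
    case 0 then show ?case using eval.prim0[OF eval_Proj'[of 0 "[a]" a]] by simp
  next
    case (Suc b)
    have "eval (Comp rf_pred [Proj 1]) [b, a - b, a] (a - Suc b)"
      by (rule eval_Comp1[OF eval_Proj'[of 1 _ "a - b"] eval_rf_pred]) auto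
    then show ?case using eval.primS[OF Suc] by simp
  qed
  then show "z = a - b \<Longrightarrow> eval rf_diff [a, b] z"
    unfolding rf_diff_def by (auto intro!: eval_Comp2 eval_Proj')
qed

lemma eval_rf_if_zero: "z = (if c = 0 then b else a) \<Longrightarrow> eval rf_if_zero [c, a, b] z"
proof -
  have "eval rf_if_zero [c, a, b] (if c = 0 then b else a)" for c
    unfolding rf_if_zero_def
  proof (induction c)
    case 0 then show ?case using eval.prim0[OF eval_Proj'[of 1 "[a, b]" b]] by simp
  next
    case (Suc c)
    then show ?case by (rule eval.primS) (auto intro: eval_Proj')
  qed
  then show "z = (if c = 0 then b else a) \<Longrightarrow> eval rf_if_zero [c, a, b] z" by simp
qed

lemma triangle_mono: "m \<le> n \<Longrightarrow> triangle m \<le> triangle n"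
  by (induction n rule: dec_induct) auto

lemma eval_rf_triangle: "z = triangle d \<Longrightarrow> eval rf_triangle [d] z"
proof -
  have "eval rf_triangle [d] (triangle d)"
    unfolding rf_triangle_def
  proof (induction d)
    case 0 then show ?case by (auto intro: eval.prim0 eval.zero)
  next
    case (Suc d)
    have "eval (Comp rf_add [Comp Succ [Proj 0], Proj 1]) [d, triangle d] (triangle (Suc d))"
      by (rule eval_Comp2[OF eval_Comp_Succ[OF eval_Proj'[of 0 _ d]] eval_Proj' eval_rf_add]) auto
    then show ?case by (rule eval.primS[OF Suc])
  qed
  then show "z = triangle d \<Longrightarrow> eval rf_triangle [d] z" by simp
qed

lemma eval_rf_pair: "z = prod_encode (a, b) \<Longrightarrow> eval rf_pair [a, b] z"
  unfolding rf_pair_def prod_encode_def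
  by (auto intro!: eval_Comp2 eval_Comp1 eval_Proj' eval_rf_add eval_rf_triangle)

text \<open>The diagonal \<open>a + b\<close> of \<open>prod_encode (a, b) = triangle (a + b) + a\<close> is the least \<open>d\<close> with
  \<open>prod_encode (a, b) < triangle (Suc d)\<close>.\<close>
definition "rf_diagonal = Mini (Comp rf_if_zero
  [Comp rf_diff [Comp rf_triangle [Comp Succ [Proj 0]], Proj 1], Zero, rf_one])"
definition "rf_fst = Comp rf_diff [Proj 0, Comp rf_triangle [rf_diagonal]]"
definition "rf_snd = Comp rf_diff [rf_diagonal, rf_fst]"

lemma eval_rf_diagonal: "eval rf_diagonal [prod_encode (a, b)] (a + b)"
proof -
  let ?test = "Comp rf_if_zero [Comp rf_diff [Comp rf_triangle [Comp Succ [Proj 0]], Proj 1], Zero, rf_one]"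
  have test: "eval ?test [d, z] (if triangle (Suc d) \<le> z then 1 else 0)" for d z
    by (rule eval_Comp3 eval_Comp2 eval_Comp1 eval_Comp_Succ eval_Proj' eval_Zero' eval_rf_one
        eval_rf_diff eval_rf_triangle eval_rf_if_zero refl | simp)+
  have below: "triangle (Suc m) \<le> prod_encode (a, b)" if "m < a + b" for m
    using that triangle_mono[of "Suc m" "a + b"] by (simp add: prod_encode_def)
  show ?thesis
    unfolding rf_diagonal_def
  proof (rule eval.mini)
    show "eval ?test [a + b, prod_encode (a, b)] 0"
      using test[of "a + b" "prod_encode (a, b)"] by (simp add: prod_encode_def)
    show "\<forall>m<a + b. \<exists>y>0. eval ?test [m, prod_encode (a, b)] y"
    proof (intro allI impI)
      fix m assume "m < a + b"
      then show "\<exists>y>0. eval ?test [m, prod_encode (a, b)] y"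
        using test[of m "prod_encode (a, b)"] below[of m] by (intro exI[of _ 1]) simp
    qed
  qed
qed

lemma eval_rf_fst: "eval rf_fst [prod_encode (a, b)] a"
  unfolding rf_fst_def
  by (rule eval_Comp2[OF eval_Proj' eval_Comp1[OF eval_rf_diagonal eval_rf_triangle[OF refl]]
        eval_rf_diff]) (auto simp: prod_encode_def)

lemma eval_rf_snd: "eval rf_snd [prod_encode (a, b)] b"
  unfolding rf_snd_def by (rule eval_Comp2[OF eval_rf_diagonal eval_rf_fst eval_rf_diff]) auto

section \<open>Evaluation with a step bound\<close>

primrec prim_iter :: "(nat \<Rightarrow> nat \<Rightarrow> nat) \<Rightarrow> nat \<Rightarrow> nat \<Rightarrow> nat" where
  "prim_iter \<phi> a 0 = a"
| "prim_iter \<phi> a (Suc c) = (if prim_iter \<phi> a c = 0 then 0 else \<phi> c (prim_iter \<phi> a c - 1))"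

text \<open>Unbounded search for the least zero of \<open>\<phi>\<close>, encoded as in \<open>prim_iter\<close> by shifted values
  (\<open>0\<close> = undefined): \<open>mini_search \<phi> c\<close> is \<open>0\<close> while no \<open>j < c\<close> decides the search, \<open>Suc (Suc m)\<close> if
  \<open>m\<close> is the least zero, and \<open>1\<close> if the search got stuck at an undefined value.\<close>
primrec mini_search :: "(nat \<Rightarrow> nat) \<Rightarrow> nat \<Rightarrow> nat" where
  "mini_search \<phi> 0 = 0"
| "mini_search \<phi> (Suc c) = (if mini_search \<phi> c \<noteq> 0 then mini_search \<phi> c
      else if \<phi> c = 0 then 1 else if \<phi> c = 1 then Suc (Suc c) else 0)"

lemma prim_iter_cong [fundef_cong]:
  assumes "\<And>j w. j < c \<Longrightarrow> \<phi> j w = \<psi> j w" and "a = a'" and "c = c'"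
  shows "prim_iter \<phi> a c = prim_iter \<psi> a' c'"
proof -
  have "(\<forall>j<n. \<forall>w. \<phi> j w = \<psi> j w) \<longrightarrow> prim_iter \<phi> a n = prim_iter \<psi> a n" for n
    by (induction n) auto
  then show ?thesis using assms by blast
qed

lemma mini_search_cong [fundef_cong]:
  assumes "\<And>j. j < c \<Longrightarrow> \<phi> j = \<psi> j" and "c = c'"
  shows "mini_search \<phi> c = mini_search \<psi> c'"
proof -
  have "(\<forall>j<n. \<phi> j = \<psi> j) \<longrightarrow> mini_search \<phi> n = mini_search \<psi> n" for n
    by (induction n) auto
  then show ?thesis using assms by blast
qed

lemma prim_iter_Suc_eq_Suc:
  "prim_iter \<phi> a (Suc c) = Suc y \<longleftrightarrow> (\<exists>v. prim_iter \<phi> a c = Suc v \<and> \<phi> c v = Suc y)"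
  by (cases "prim_iter \<phi> a c") auto

declare prim_iter.simps(2) [simp del]

lemma mini_search_eq_0_iff: "mini_search \<phi> c = 0 \<longleftrightarrow> (\<forall>j<c. 2 \<le> \<phi> j)"
  by (induction c) (auto simp: less_Suc_eq)

lemma mini_search_eq_Suc_Suc_iff:
  "mini_search \<phi> c = Suc (Suc m) \<longleftrightarrow> m < c \<and> \<phi> m = 1 \<and> (\<forall>j<m. 2 \<le> \<phi> j)"
proof (induction c)
  case (Suc c)
  then show ?case
    using mini_search_eq_0_iff[of \<phi> c] by (cases "\<phi> c = 1") (auto simp: less_Suc_eq)
qed simp

text \<open>Evaluation with step bound \<open>k\<close>: the value \<open>0\<close> means ``no result found within the bound'',
  \<open>Suc y\<close> means result \<open>y\<close>. Only the \<open>\<mu>\<close>-operator consumes the bound: it searches below \<open>k\<close>.\<close>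
fun clocked :: "recf \<Rightarrow> nat \<Rightarrow> nat list \<Rightarrow> nat" where
  "clocked Zero k xs = 1"
| "clocked Succ k xs = (case xs of [] \<Rightarrow> 0 | x # _ \<Rightarrow> Suc (Suc x))"
| "clocked (Proj i) k xs = (if i < length xs then Suc (xs ! i) else 0)"
| "clocked (Comp f gs) k xs = (let vs = map (\<lambda>g. clocked g k xs) gs in
     if 0 \<in> set vs then 0 else clocked f k (map (\<lambda>v. v - 1) vs))"
| "clocked (Prim g h) k xs = (case xs of [] \<Rightarrow> 0
     | c # ys \<Rightarrow> prim_iter (\<lambda>j w. clocked h k (j # w # ys)) (clocked g k ys) c)"
| "clocked (Mini f) k xs = mini_search (\<lambda>j. clocked f k (j # xs)) k - 1"

lemma clocked_Comp_eq_Suc: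
  "clocked (Comp f gs) k xs = Suc y \<longleftrightarrow>
   (\<forall>g\<in>set gs. clocked g k xs \<noteq> 0) \<and> clocked f k (map (\<lambda>g. clocked g k xs - 1) gs) = Suc y"
  by (auto simp: Let_def image_iff o_def)

lemma clocked_Mini_eq_Suc:
  "clocked (Mini f) k xs = Suc y \<longleftrightarrow>
   y < k \<and> clocked f k (y # xs) = 1 \<and> (\<forall>j<y. \<exists>z. clocked f k (j # xs) = Suc (Suc z))"
proof -
  have "n - 1 = Suc y \<longleftrightarrow> n = Suc (Suc y)" for n :: nat by arith
  moreover have "2 \<le> n \<longleftrightarrow> (\<exists>z. n = Suc (Suc z))" for n :: nat by presburger
  ultimately show ?thesis using mini_search_eq_Suc_Suc_iff by simp
qed

declare clocked.simps(4,6) [simp del]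

lemma clocked_sound: "clocked r k xs = Suc y \<Longrightarrow> eval r xs y"
proof (induction r arbitrary: xs y)
  case Zero then show ?case by (simp add: eval.zero)
next
  case Succ then show ?case by (cases xs) (auto intro: eval.succ)
next
  case (Proj i) then show ?case by (auto split: if_splits intro: eval.proj)
next
  case (Comp f gs)
  from Comp.prems have nz: "\<forall>g\<in>set gs. clocked g k xs \<noteq> 0"
    and "clocked f k (map (\<lambda>g. clocked g k xs - 1) gs) = Suc y"
    by (simp_all add: clocked_Comp_eq_Suc)
  moreover have "list_all2 (\<lambda>g y. eval g xs y) gs (map (\<lambda>g. clocked g k xs - 1) gs)"
    unfolding list_all2_map2 list_all2_same using nz Comp.IH(2) by (metis Suc_pred' not_gr0)
  ultimately show ?case using Comp.IH(1) by (blast intro: eval.comp)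
next
  case (Prim g h)
  have "prim_iter (\<lambda>j w. clocked h k (j # w # ys)) (clocked g k ys) c = Suc y \<Longrightarrow>
        eval (Prim g h) (c # ys) y" for c ys y
    by (induction c arbitrary: y)
      (auto simp: prim_iter_Suc_eq_Suc intro: eval.prim0 eval.primS Prim.IH)
  then show ?case using Prim.prems by (cases xs) auto
next
  case (Mini f)
  from Mini.prems have "clocked f k (y # xs) = Suc 0"
    and "\<forall>j<y. \<exists>z. clocked f k (j # xs) = Suc (Suc z)"
    by (simp_all add: clocked_Mini_eq_Suc)
  then show ?case using Mini.IH by (blast intro: eval.mini)
qed

lemma clocked_mono: "clocked r k xs = Suc y \<Longrightarrow> k \<le> k' \<Longrightarrow> clocked r k' xs = Suc y"
proof (induction r arbitrary: xs y)
  case Zero then show ?case by simp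
next
  case Succ then show ?case by (cases xs) auto
next
  case (Proj i) then show ?case by (auto split: if_splits)
next
  case (Comp f gs)
  from Comp.prems(1) have nz: "\<forall>g\<in>set gs. clocked g k xs \<noteq> 0"
    and fk: "clocked f k (map (\<lambda>g. clocked g k xs - 1) gs) = Suc y"
    by (simp_all add: clocked_Comp_eq_Suc)
  have same: "clocked g k' xs = clocked g k xs" if g: "g \<in> set gs" for g
  proof -
    obtain v where v: "clocked g k xs = Suc v" using nz g by (cases "clocked g k xs") auto
    show ?thesis using Comp.IH(2)[OF g v Comp.prems(2)] v by simp
  qed
  then have "map (\<lambda>g. clocked g k' xs - 1) gs = map (\<lambda>g. clocked g k xs - 1) gs"
    by simp
  then have "clocked f k' (map (\<lambda>g. clocked g k' xs - 1) gs) = Suc y"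
    using Comp.IH(1)[OF fk Comp.prems(2)] by metis
  moreover have "\<forall>g\<in>set gs. clocked g k' xs \<noteq> 0" using nz same by simp
  ultimately show ?case unfolding clocked_Comp_eq_Suc by blast
next
  case (Prim g h)
  have "prim_iter (\<lambda>j w. clocked h k (j # w # ys)) (clocked g k ys) c = Suc y \<Longrightarrow>
        prim_iter (\<lambda>j w. clocked h k' (j # w # ys)) (clocked g k' ys) c = Suc y" for c ys y
  proof (induction c arbitrary: y)
    case 0 then show ?case using Prim.IH(1) Prim.prems(2) by simp
  next
    case (Suc c) then show ?case using Prim.IH(2) Prim.prems(2) by (auto simp: prim_iter_Suc_eq_Suc)
  qed
  then show ?case using Prim.prems by (cases xs) auto
next
  case (Mini f)
  from Mini.prems(1) have "y < k" and one: "clocked f k (y # xs) = Suc 0"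
    and below: "\<forall>j<y. \<exists>z. clocked f k (j # xs) = Suc (Suc z)"
    by (simp_all add: clocked_Mini_eq_Suc)
  moreover have "\<forall>j<y. \<exists>z. clocked f k' (j # xs) = Suc (Suc z)"
    using below Mini.IH Mini.prems(2) by blast
  ultimately show ?case using Mini.IH[OF one Mini.prems(2)] Mini.prems(2)
    by (simp add: clocked_Mini_eq_Suc)
qed


lemma clocked_complete: "eval r xs y \<Longrightarrow> \<forall>\<^sub>F k in sequentially. clocked r k xs = Suc y"
proof (induction rule: eval.induct)
  case (comp xs gs ys f z)
  have len: "length ys = length gs" using comp.IH(1) by (simp add: list_all2_lengthD)
  have "\<forall>\<^sub>F k in sequentially. \<forall>i\<in>{..<length gs}. clocked (gs ! i) k xs = Suc (ys ! i)"
    using comp.IH(1) by (intro eventually_ball_finite) (auto simp: list_all2_conv_all_nth)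
  moreover note comp.IH(2)
  ultimately show ?case
  proof eventually_elim
    case (elim k)
    then have "map (\<lambda>g. clocked g k xs - 1) gs = ys" and "\<forall>g\<in>set gs. clocked g k xs \<noteq> 0"
      using len by (auto simp: list_eq_iff_nth_eq in_set_conv_nth)
    then show ?case using elim by (simp add: clocked_Comp_eq_Suc)
  qed
next
  case (primS g h n xs y z)
  from primS.IH show ?case
    by (rule eventually_elim2) (simp add: prim_iter_Suc_eq_Suc)
next
  case (mini f n xs)
  have "\<forall>\<^sub>F k in sequentially. \<forall>m\<in>{..<n}. \<exists>z. clocked f k (m # xs) = Suc (Suc z)"
    using mini.IH(2) by (intro eventually_ball_finite) (auto elim!: eventually_mono gr0_implies_Suc)
  moreover note mini.IH(1) eventually_gt_at_top[of n]
  ultimately show ?case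
    by eventually_elim (simp add: clocked_Mini_eq_Suc)
qed auto

primrec rf_all_pos :: "recf list \<Rightarrow> recf" where
  "rf_all_pos [] = rf_one"
| "rf_all_pos (c # cs) = Comp rf_if_zero [c, rf_all_pos cs, Zero]"

lemma eval_rf_all_pos:
  "list_all2 (\<lambda>c v. eval c xs v) cs vs \<Longrightarrow> eval (rf_all_pos cs) xs (if 0 \<in> set vs then 0 else 1)"
proof (induction rule: list_all2_induct)
  case Nil then show ?case by (simp add: eval_rf_one)
next
  case (Cons c cs v vs)
  show ?case unfolding rf_all_pos.simps
    by (rule eval_Comp3[OF Cons.hyps(1) Cons.IH eval_Zero' eval_rf_if_zero]) auto
qed

definition clocked_comp_rf :: "recf \<Rightarrow> recf list \<Rightarrow> recf" where
  "clocked_comp_rf F Gs =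
     Comp rf_if_zero [rf_all_pos Gs, Comp F (Proj 0 # map (\<lambda>G. Comp rf_pred [G]) Gs), Zero]"

text \<open>\<open>Prim\<close> recurses on its first argument, so the clock \<open>k\<close> and the counter \<open>c\<close> are swapped first.\<close>
definition clocked_prim_rf :: "nat \<Rightarrow> recf \<Rightarrow> recf \<Rightarrow> recf" where
  "clocked_prim_rf m G H =
     Comp (Prim G (Comp rf_if_zero [Proj 1,
       Comp H (Proj 2 # Proj 0 # Comp rf_pred [Proj 1] # map (\<lambda>i. Proj (i + 3)) [0..<m]), Zero]))
     (Proj 1 # Proj 0 # map (\<lambda>i. Proj (i + 2)) [0..<m])"

definition clocked_mini_rf :: "nat \<Rightarrow> recf \<Rightarrow> recf" where
  "clocked_mini_rf n F = (let V = Comp F (Proj 2 # Proj 0 # map (\<lambda>i. Proj (i + 3)) [0..<n]) in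
     Comp rf_pred [Comp (Prim Zero (Comp rf_if_zero [Proj 1, Proj 1,
       Comp rf_if_zero [V, Comp rf_if_zero [Comp rf_pred [V], Zero, Comp Succ [Comp Succ [Proj 0]]],
         rf_one]]))
     (Proj 0 # Proj 0 # map (\<lambda>i. Proj (i + 1)) [0..<n])])"

lemma eval_clocked_comp_rf:
  assumes "list_all2 (\<lambda>G v. eval G (k # xs) v) Gs vs" and "eval F (k # map (\<lambda>v. v - 1) vs) z"
  shows "eval (clocked_comp_rf F Gs) (k # xs) (if 0 \<in> set vs then 0 else z)"
proof -
  have "list_all2 (\<lambda>G v. eval G (k # xs) v) (map (\<lambda>G. Comp rf_pred [G]) Gs) (map (\<lambda>v. v - 1) vs)"
    using assms(1) unfolding list_all2_map1 list_all2_map2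
    by (rule list_all2_mono) (blast intro: eval_Comp1 eval_rf_pred)
  then have "eval (Comp F (Proj 0 # map (\<lambda>G. Comp rf_pred [G]) Gs)) (k # xs) z"
    using assms(2) by (intro eval.comp[where ys = "k # map (\<lambda>v. v - 1) vs"]) (auto intro: eval_Proj')
  then show ?thesis
    unfolding clocked_comp_rf_def
    by (rule eval_Comp3[OF eval_rf_all_pos[OF assms(1)] _ eval_Zero' eval_rf_if_zero]) auto
qed

lemma eval_clocked_prim_rf:
  assumes ys: "length ys = m" and G: "eval G (k # ys) a"
    and H: "\<And>j w. eval H (k # j # w # ys) (\<phi> j w)"
  shows "eval (clocked_prim_rf m G H) (k # c # ys) (prim_iter \<phi> a c)"
proof -
  let ?step = "Comp rf_if_zero [Proj 1,
    Comp H (Proj 2 # Proj 0 # Comp rf_pred [Proj 1] # map (\<lambda>i. Proj (i + 3)) [0..<m]), Zero]"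
  have "eval (Prim G ?step) (c # k # ys) (prim_iter \<phi> a c)" for c
  proof (induction c)
    case 0 then show ?case using G by (auto intro: eval.prim0)
  next
    case (Suc c)
    let ?v = "prim_iter \<phi> a c"
    have "list_all2 (\<lambda>g y. eval g (c # ?v # k # ys) y)
        (Proj 2 # Proj 0 # Comp rf_pred [Proj 1] # map (\<lambda>i. Proj (i + 3)) [0..<m]) (k # c # (?v - 1) # ys)"
      using eval_Projs_shifted[of "[c, ?v, k]" 3 ys] ys
      by (auto intro!: eval_Proj' eval_Comp1[OF _ eval_rf_pred])
    then have body: "eval (Comp H (Proj 2 # Proj 0 # Comp rf_pred [Proj 1] # map (\<lambda>i. Proj (i + 3)) [0..<m]))
        (c # ?v # k # ys) (\<phi> c (?v - 1))"
      using H by (rule eval.comp)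
    have "eval ?step (c # ?v # k # ys) (prim_iter \<phi> a (Suc c))"
      by (rule eval_Comp3[OF eval_Proj'[of 1 _ ?v] body eval_Zero' eval_rf_if_zero])
        (auto simp: prim_iter.simps)
    then show ?case by (rule eval.primS[OF Suc.IH])
  qed
  moreover have "list_all2 (\<lambda>g y. eval g (k # c # ys) y)
      (Proj 1 # Proj 0 # map (\<lambda>i. Proj (i + 2)) [0..<m]) (c # k # ys)"
    using eval_Projs_shifted[of "[k, c]" 2 ys] ys by (auto intro!: eval_Proj')
  ultimately show ?thesis unfolding clocked_prim_rf_def by (blast intro: eval.comp)
qed

lemma eval_clocked_mini_rf:
  assumes xs: "length xs = n" and F: "\<And>j. eval F (k # j # xs) (\<phi> j)"
  shows "eval (clocked_mini_rf n F) (k # xs) (mini_search \<phi> k - 1)"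
proof -
  let ?V = "Comp F (Proj 2 # Proj 0 # map (\<lambda>i. Proj (i + 3)) [0..<n])"
  let ?step = "Comp rf_if_zero [Proj 1, Proj 1, Comp rf_if_zero [?V,
    Comp rf_if_zero [Comp rf_pred [?V], Zero, Comp Succ [Comp Succ [Proj 0]]], rf_one]]"
  have V: "eval ?V (c # s # k # xs) (\<phi> c)" for c s
    by (rule eval.comp[where ys = "k # c # xs"])
      (use eval_Projs_shifted[of "[c, s, k]" 3 xs] xs F in \<open>auto intro!: eval_Proj'\<close>)
  have "eval (Prim Zero ?step) (c # k # xs) (mini_search \<phi> c)" for c
  proof (induction c)
    case 0 then show ?case by (auto intro: eval.prim0 eval.zero)
  next
    case (Suc c)
    have "eval ?step (c # mini_search \<phi> c # k # xs) (mini_search \<phi> (Suc c))"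
      by (rule eval_Comp3 eval_Comp1 eval_Comp_Succ eval_Proj' eval_Zero' eval_rf_one eval_rf_pred
          eval_rf_if_zero V refl | simp)+
    then show ?case by (rule eval.primS[OF Suc.IH])
  qed
  moreover have "list_all2 (\<lambda>g y. eval g (k # xs) y)
      (Proj 0 # Proj 0 # map (\<lambda>i. Proj (i + 1)) [0..<n]) (k # k # xs)"
    using eval_Projs_shifted[of "[k]" 1 xs] xs by (auto intro!: eval_Proj')
  ultimately show ?thesis
    unfolding clocked_mini_rf_def Let_def by (blast intro: eval.comp eval_Comp1 eval_rf_pred)
qed

fun clocked_rf :: "nat \<Rightarrow> recf \<Rightarrow> recf" where
  "clocked_rf n Zero = rf_one"
| "clocked_rf n Succ = (if n = 0 then Zero else Comp Succ [Comp Succ [Proj 1]])"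
| "clocked_rf n (Proj i) = (if i < n then Comp Succ [Proj (Suc i)] else Zero)"
| "clocked_rf n (Comp f gs) = clocked_comp_rf (clocked_rf (length gs) f) (map (clocked_rf n) gs)"
| "clocked_rf n (Prim g h) = (case n of 0 \<Rightarrow> Zero
     | Suc m \<Rightarrow> clocked_prim_rf m (clocked_rf m g) (clocked_rf (Suc (Suc m)) h))"
| "clocked_rf n (Mini f) = clocked_mini_rf n (clocked_rf (Suc n) f)"

lemma eval_clocked_rf: "length xs = n \<Longrightarrow> eval (clocked_rf n r) (k # xs) (clocked r k xs)"
proof (induction r arbitrary: n xs)
  case Zero then show ?case by (simp add: eval_rf_one)
next
  case Succ then show ?case
    by (cases xs) (auto intro!: eval.zero eval_Comp_Succ eval_Proj')
next
  case (Proj i) then show ?case by (auto intro!: eval.zero eval_Comp_Succ eval_Proj')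
next
  case (Comp f gs)
  have "list_all2 (\<lambda>G v. eval G (k # xs) v) (map (clocked_rf n) gs) (map (\<lambda>g. clocked g k xs) gs)"
    unfolding list_all2_map1 list_all2_map2 list_all2_same using Comp.IH(2) Comp.prems by blast
  from eval_clocked_comp_rf[OF this Comp.IH(1)] show ?case
    by (simp add: clocked.simps(4) Let_def o_def)
next
  case (Prim g h)
  show ?case
  proof (cases xs)
    case (Cons c ys)
    have "eval (clocked_rf (Suc (Suc (length ys))) h) (k # j # w # ys) (clocked h k (j # w # ys))"
      for j w using Prim.IH(2)[of "j # w # ys"] by simp
    moreover have "n = Suc (length ys)" using Prim.prems Cons by simp
    ultimately show ?thesis
      unfolding Cons using eval_clocked_prim_rf[OF refl Prim.IH(1)[OF refl]] by simp
  qed (use Prim.prems in \<open>auto intro: eval.zero\<close>)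
next
  case (Mini f)
  have "eval (clocked_rf (Suc n) f) (k # j # xs) (clocked f k (j # xs))" for j
    using Mini.IH[of "j # xs"] Mini.prems by simp
  from eval_clocked_mini_rf[OF Mini.prems this] show ?case by (simp add: clocked.simps(6))
qed

section \<open>Stages of a dovetailed search\<close>

primrec last_output :: "recf \<Rightarrow> nat \<Rightarrow> nat \<Rightarrow> nat \<Rightarrow> nat" where
  "last_output r e K 0 = clocked r K [prod_encode (e, 0)]"
| "last_output r e K (Suc s) = (if clocked r K [prod_encode (e, Suc s)] = 0 then last_output r e K s
     else clocked r K [prod_encode (e, Suc s)])"

text \<open>Stage \<open>K\<close> of the dovetailed search: the clocked output of \<open>r\<close> on \<open>\<langle>e, s\<rangle>\<close> for the largest
  \<open>s \<le> K\<close> on which \<open>r\<close> halts within \<open>K\<close> steps, or \<open>0\<close> if there is none.\<close>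
definition stage_value :: "recf \<Rightarrow> nat \<Rightarrow> nat \<Rightarrow> nat" where
  "stage_value r e K = last_output r e K K"

lemma last_output_eq_0_iff:
  "last_output r e K s = 0 \<longleftrightarrow> (\<forall>s'\<le>s. clocked r K [prod_encode (e, s')] = 0)"
  by (induction s) (auto simp: le_Suc_eq)

lemma last_output_eq_Suc:
  "last_output r e K s = Suc y \<Longrightarrow> \<exists>s'\<le>s. clocked r K [prod_encode (e, s')] = Suc y \<and>
     (\<forall>s''. s' < s'' \<and> s'' \<le> s \<longrightarrow> clocked r K [prod_encode (e, s'')] = 0)"
proof (induction s)
  case (Suc s)
  show ?case
  proof (cases "clocked r K [prod_encode (e, Suc s)] = 0")
    case True
    with Suc obtain s' where "s' \<le> s" "clocked r K [prod_encode (e, s')] = Suc y"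
      "\<forall>s''. s' < s'' \<and> s'' \<le> s \<longrightarrow> clocked r K [prod_encode (e, s'')] = 0" by auto
    then show ?thesis using True by (intro exI[of _ s']) (auto simp: le_Suc_eq)
  qed (use Suc.prems in auto)
qed auto

lemma stage_value_nonzero_mono:
  assumes "stage_value r e K \<noteq> 0" and "K \<le> K'"
  shows "stage_value r e K' \<noteq> 0"
proof -
  obtain s where "s \<le> K" and "clocked r K [prod_encode (e, s)] \<noteq> 0"
    using assms(1) by (auto simp: stage_value_def last_output_eq_0_iff)
  moreover from this(2) obtain y where "clocked r K [prod_encode (e, s)] = Suc y"
    using not0_implies_Suc by blast
  moreover from this have "clocked r K' [prod_encode (e, s)] = Suc y"
    using assms(2) by (rule clocked_mono)
  ultimately show ?thesis
    using assms(2) by (auto simp: stage_value_def last_output_eq_0_iff intro!: exI[of _ s])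
qed

lemma stage_value_eq_Suc:
  "stage_value r e K = Suc y \<Longrightarrow> \<exists>s\<le>K. eval r [prod_encode (e, s)] y \<and> clocked r K [prod_encode (e, s)] = Suc y"
  unfolding stage_value_def by (auto dest!: last_output_eq_Suc intro: clocked_sound)

lemma stage_value_latest:
  assumes "stage_value r e K = Suc y" and "s \<le> K" and "clocked r K [prod_encode (e, s)] \<noteq> 0"
  shows "\<exists>s'\<ge>s. eval r [prod_encode (e, s')] y"
proof -
  obtain s' where "s' \<le> K" and out: "clocked r K [prod_encode (e, s')] = Suc y"
    and later: "\<forall>s''. s' < s'' \<and> s'' \<le> K \<longrightarrow> clocked r K [prod_encode (e, s'')] = 0"
    using assms(1) last_output_eq_Suc unfolding stage_value_def by blast
  have "s \<le> s'" using later assms(2,3) by (meson not_le)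
  then show ?thesis using clocked_sound[OF out] by blast
qed

definition first_stage :: "recf \<Rightarrow> nat \<Rightarrow> nat" where
  "first_stage r e = (LEAST K. stage_value r e K \<noteq> 0)"

definition normal_seq :: "recf \<Rightarrow> nat \<Rightarrow> nat \<Rightarrow> nat option" where
  "normal_seq r e t = (if \<exists>K. stage_value r e K \<noteq> 0
     then Some (stage_value r e (first_stage r e + t) - 1) else None)"

lemma normal_seq_eq_Some:
  assumes "normal_seq r e t = Some y"
  shows "stage_value r e (first_stage r e + t) = Suc y"
proof -
  have "\<exists>K. stage_value r e K \<noteq> 0" using assms by (auto simp: normal_seq_def split: if_splits)
  then have "stage_value r e (first_stage r e) \<noteq> 0" unfolding first_stage_def by (rule LeastI_ex)
  then have "stage_value r e (first_stage r e + t) \<noteq> 0" by (rule stage_value_nonzero_mono) simp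
  then show ?thesis using assms by (auto simp: normal_seq_def split: if_splits)
qed

lemma normal_seq_SomeD: "normal_seq r e t = Some y \<Longrightarrow> \<exists>s. eval r [prod_encode (e, s)] y"
  by (blast dest: normal_seq_eq_Some stage_value_eq_Suc)

lemma normal_seq_order:
  assumes "t1 \<le> t2" and "normal_seq r e t1 = Some y1" and "normal_seq r e t2 = Some y2"
  shows "\<exists>s1 s2. s1 \<le> s2 \<and> eval r [prod_encode (e, s1)] y1 \<and> eval r [prod_encode (e, s2)] y2"
proof -
  let ?K1 = "first_stage r e + t1" and ?K2 = "first_stage r e + t2"
  obtain s1 where "s1 \<le> ?K1" and "eval r [prod_encode (e, s1)] y1"
    and "clocked r ?K1 [prod_encode (e, s1)] = Suc y1"
    using stage_value_eq_Suc[OF normal_seq_eq_Some[OF assms(2)]] by blast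
  moreover from this(3) have "clocked r ?K2 [prod_encode (e, s1)] = Suc y1"
    by (rule clocked_mono) (use assms(1) in simp)
  ultimately obtain s2 where "s1 \<le> s2" and "eval r [prod_encode (e, s2)] y2"
    using stage_value_latest[OF normal_seq_eq_Some[OF assms(3)], of s1] assms(1) by auto
  then show ?thesis using \<open>eval r [prod_encode (e, s1)] y1\<close> by blast
qed

lemma normal_seq_cofinal:
  assumes "eval r [prod_encode (e, s)] y"
  shows "\<exists>t s' y'. s \<le> s' \<and> normal_seq r e t = Some y' \<and> eval r [prod_encode (e, s')] y'"
proof -
  obtain k where k: "clocked r k' [prod_encode (e, s)] = Suc y" if "k \<le> k'" for k'
    using clocked_complete[OF assms] by (auto simp: eventually_sequentially)
  let ?K = "max k s"
  have "stage_value r e ?K \<noteq> 0"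
    using k[of ?K] by (auto simp: stage_value_def last_output_eq_0_iff intro!: exI[of _ s])
  then have "\<exists>K. stage_value r e K \<noteq> 0" by blast
  then obtain y' where y': "normal_seq r e ?K = Some y'" by (simp add: normal_seq_def)
  have "clocked r (first_stage r e + ?K) [prod_encode (e, s)] \<noteq> 0" using k by simp
  moreover have "s \<le> first_stage r e + ?K" by simp
  ultimately obtain s' where "s \<le> s'" and "eval r [prod_encode (e, s')] y'"
    using stage_value_latest[OF normal_seq_eq_Some[OF y']] by blast
  then show ?thesis using y' by blast
qed

lemma normal_seq_defined_iff: "normal_seq r e t \<noteq> None \<longleftrightarrow> (\<exists>s y. eval r [prod_encode (e, s)] y)"
proof
  assume "\<exists>s y. eval r [prod_encode (e, s)] y"
  then obtain t' y' where "normal_seq r e t' = Some y'" using normal_seq_cofinal by blast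
  then show "normal_seq r e t \<noteq> None" by (auto simp: normal_seq_def split: if_splits)
qed (use normal_seq_SomeD in blast)

definition stage_value_rf :: "recf \<Rightarrow> recf" where
  "stage_value_rf r = (let V = Comp (clocked_rf 1 r) [Proj 3, Comp rf_pair [Proj 2, Comp Succ [Proj 0]]] in
     Comp (Prim (Comp (clocked_rf 1 r) [Proj 1, Comp rf_pair [Proj 0, Zero]])
                (Comp rf_if_zero [V, V, Proj 1]))
       [Proj 1, Proj 0, Proj 1])"

lemma eval_stage_value_rf: "eval (stage_value_rf r) [e, K] (stage_value r e K)"
proof -
  have clocked: "eval (clocked_rf 1 r) [K, z] (clocked r K [z])" for z
    using eval_clocked_rf[of "[z]" 1 r K] by simp
  let ?V = "Comp (clocked_rf 1 r) [Proj 3, Comp rf_pair [Proj 2, Comp Succ [Proj 0]]]"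
  let ?step = "Comp rf_if_zero [?V, ?V, Proj 1]"
  let ?base = "Comp (clocked_rf 1 r) [Proj 1, Comp rf_pair [Proj 0, Zero]]"
  have "eval (Prim ?base ?step) [s, e, K] (last_output r e K s)" for s
  proof (induction s)
    case 0
    have "eval ?base [e, K] (clocked r K [prod_encode (e, 0)])"
      by (rule eval_Comp2[OF eval_Proj'[of 1 _ K] eval_Comp2[OF eval_Proj'[of 0 _ e] eval_Zero' eval_rf_pair]
            clocked]) auto
    then show ?case using eval.prim0 by simp
  next
    case (Suc s)
    have V: "eval ?V [s, w, e, K] (clocked r K [prod_encode (e, Suc s)])" for w
      by (rule eval_Comp2[OF eval_Proj'[of 3 _ K] eval_Comp2[OF eval_Proj'[of 2 _ e]
            eval_Comp_Succ[OF eval_Proj'[of 0 _ s]] eval_rf_pair] clocked]) auto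
    have "eval ?step [s, last_output r e K s, e, K] (last_output r e K (Suc s))"
      by (rule eval_Comp3[OF V V eval_Proj' eval_rf_if_zero]) auto
    then show ?case by (rule eval.primS[OF Suc])
  qed
  then show ?thesis
    unfolding stage_value_rf_def stage_value_def Let_def
    by (intro eval.comp[where ys = "[K, e, K]"]) (auto intro: eval_Proj')
qed

definition first_stage_rf :: "recf \<Rightarrow> recf" where
  "first_stage_rf r = Mini (Comp rf_if_zero [Comp (stage_value_rf r) [Proj 1, Proj 0], Zero, rf_one])"

lemma eval_first_stage_rf_iff:
  "eval (first_stage_rf r) [e] y \<longleftrightarrow> (\<exists>K. stage_value r e K \<noteq> 0) \<and> y = first_stage r e"
proof -
  let ?test = "Comp rf_if_zero [Comp (stage_value_rf r) [Proj 1, Proj 0], Zero, rf_one]"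
  have test: "eval ?test [K, e] (if stage_value r e K = 0 then 1 else 0)" for K
    by (rule eval_Comp3[OF eval_Comp2[OF eval_Proj' eval_Proj' eval_stage_value_rf] eval_Zero' eval_rf_one
          eval_rf_if_zero]) auto
  have "eval (Mini ?test) [e] y \<longleftrightarrow> stage_value r e y \<noteq> 0 \<and> (\<forall>K<y. stage_value r e K = 0)"
  proof
    assume "eval (Mini ?test) [e] y"
    then have zero: "eval ?test [y, e] 0" and pos: "\<forall>K<y. \<exists>v>0. eval ?test [K, e] v"
      by (auto elim: eval_MiniE)
    have "stage_value r e y \<noteq> 0"
      using eval_deterministic[OF zero test] by (simp split: if_splits)
    moreover have "stage_value r e K = 0" if "K < y" for K
      using pos that eval_deterministic[OF _ test] by (fastforce split: if_splits)
    ultimately show "stage_value r e y \<noteq> 0 \<and> (\<forall>K<y. stage_value r e K = 0)" by blast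
  next
    assume y: "stage_value r e y \<noteq> 0 \<and> (\<forall>K<y. stage_value r e K = 0)"
    show "eval (Mini ?test) [e] y"
    proof (rule eval.mini)
      show "eval ?test [y, e] 0" using test[of y] y by simp
      show "\<forall>K<y. \<exists>v>0. eval ?test [K, e] v"
      proof (intro allI impI)
        fix K assume "K < y"
        then have "eval ?test [K, e] 1" using test[of K] y by simp
        then show "\<exists>v>0. eval ?test [K, e] v" by blast
      qed
    qed
  qed
  also have "\<dots> \<longleftrightarrow> (\<exists>K. stage_value r e K \<noteq> 0) \<and> y = first_stage r e"
    unfolding first_stage_def by (metis (mono_tags, lifting) LeastI_ex Least_equality not_less_Least leI)
  finally show ?thesis unfolding first_stage_rf_def .
qed

definition normal_seq_rf :: "recf \<Rightarrow> recf" where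
  "normal_seq_rf r = Comp rf_pred
     [Comp (stage_value_rf r) [rf_fst, Comp rf_add [Comp (first_stage_rf r) [rf_fst], rf_snd]]]"

lemma eval_normal_seq_rf:
  assumes "normal_seq r e t = Some y"
  shows "eval (normal_seq_rf r) [prod_encode (e, t)] y"
proof -
  have "\<exists>K. stage_value r e K \<noteq> 0" and y: "y = stage_value r e (first_stage r e + t) - 1"
    using assms by (auto simp: normal_seq_def split: if_splits)
  then have "eval (first_stage_rf r) [e] (first_stage r e)" by (simp add: eval_first_stage_rf_iff)
  then show ?thesis
    unfolding normal_seq_rf_def y
    by (intro eval_Comp1[OF eval_Comp2[OF eval_rf_fst _ eval_stage_value_rf] eval_rf_pred]
        eval_Comp2[OF eval_Comp1[OF eval_rf_fst] eval_rf_snd eval_rf_add]) auto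
qed

lemma eval_normal_seq_rf_iff:
  "eval (normal_seq_rf r) [prod_encode (e, t)] y \<longleftrightarrow> normal_seq r e t = Some y"
proof
  let ?z = "[prod_encode (e, t)]"
  assume ev: "eval (normal_seq_rf r) ?z y"
  then obtain w where "eval (Comp (stage_value_rf r)
      [rf_fst, Comp rf_add [Comp (first_stage_rf r) [rf_fst], rf_snd]]) ?z w"
    unfolding normal_seq_rf_def using eval_Comp1_inv by blast
  then obtain v where "eval (Comp rf_add [Comp (first_stage_rf r) [rf_fst], rf_snd]) ?z v"
    using eval_Comp_arg by (metis list.set_intros)
  then obtain u where "eval (Comp (first_stage_rf r) [rf_fst]) ?z u"
    using eval_Comp_arg by (metis list.set_intros(1))
  then obtain e' where "eval rf_fst ?z e'" and "eval (first_stage_rf r) [e'] u"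
    using eval_Comp1_inv by blast
  then have "\<exists>K. stage_value r e K \<noteq> 0"
    using eval_deterministic[OF _ eval_rf_fst] eval_first_stage_rf_iff by metis
  then obtain y' where "normal_seq r e t = Some y'" by (simp add: normal_seq_def)
  moreover from eval_normal_seq_rf[OF this] have "y' = y" using ev by (rule eval_deterministic)
  ultimately show "normal_seq r e t = Some y" by simp
qed (rule eval_normal_seq_rf)

definition restrict_rf :: "recf \<Rightarrow> recf \<Rightarrow> recf" where
  "restrict_rf D R = Comp (Proj 1) [Comp D [rf_fst], R]"

lemma eval_restrict_rf_iff:
  "eval (restrict_rf D R) [prod_encode (e, t)] y \<longleftrightarrow>
   (\<exists>w. eval D [e] w) \<and> eval R [prod_encode (e, t)] y"
proof
  let ?z = "[prod_encode (e, t)]"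
  assume "eval (restrict_rf D R) ?z y"
  then obtain ys where "list_all2 (\<lambda>g. eval g ?z) [Comp D [rf_fst], R] ys" and "eval (Proj 1) ys y"
    unfolding restrict_rf_def by (rule eval_CompE)
  then obtain v where "eval (Comp D [rf_fst]) ?z v" and "eval R ?z y"
    by (auto simp: list_all2_Cons1 elim: eval_ProjE)
  moreover from this(1) obtain e' where "eval rf_fst ?z e'" and "eval D [e'] v"
    using eval_Comp1_inv by blast
  ultimately show "(\<exists>w. eval D [e] w) \<and> eval R ?z y"
    using eval_deterministic[OF _ eval_rf_fst] by metis
next
  assume "(\<exists>w. eval D [e] w) \<and> eval R [prod_encode (e, t)] y"
  then show "eval (restrict_rf D R) [prod_encode (e, t)] y"
    unfolding restrict_rf_def by (auto intro!: eval_Comp2 eval_Comp1 eval_rf_fst eval_Proj')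
qed

section \<open>Maxima of monotone sequences\<close>

definition mono_seq :: "('d \<Rightarrow> 'd \<Rightarrow> bool) \<Rightarrow> (nat \<Rightarrow> 'd option) \<Rightarrow> bool" where
  "mono_seq lt a \<longleftrightarrow> (\<forall>s t u v. s \<le> t \<longrightarrow> a s = Some u \<longrightarrow> a t = Some v \<longrightarrow> u = v \<or> lt u v)"

lemma mono2_iff_mono_seq: "mono2 X lt f \<longleftrightarrow> (\<forall>x\<in>elems X. mono_seq lt (f x))"
  unfolding mono2_def mono_seq_def by blast

definition greatest_in :: "('d \<Rightarrow> 'd \<Rightarrow> bool) \<Rightarrow> 'd set \<Rightarrow> 'd \<Rightarrow> bool" where
  "greatest_in lt S m \<longleftrightarrow> m \<in> S \<and> (\<forall>d\<in>S. d = m \<or> lt d m)"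

lemma greatest_in_unique:
  "asymp lt \<Longrightarrow> greatest_in lt S m \<Longrightarrow> greatest_in lt S m' \<Longrightarrow> m = m'"
  unfolding greatest_in_def by (metis asympD)

lemma finite_chain_has_greatest:
  assumes "transp lt" and "finite A" and "A \<noteq> {}" and "\<forall>u\<in>A. \<forall>v\<in>A. u = v \<or> lt u v \<or> lt v u"
  shows "\<exists>m. greatest_in lt A m"
  using assms(2-4)
proof (induction A rule: finite_ne_induct)
  case (singleton x) then show ?case by (simp add: greatest_in_def)
next
  case (insert x A)
  then obtain m where m: "greatest_in lt A m" by auto
  then have "x = m \<or> lt x m \<or> lt m x" using insert.prems by (auto simp: greatest_in_def)
  then show ?case
    using m assms(1) unfolding greatest_in_def by (metis insert_iff transpD)
qed

lemma maxD_restrict: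
  "maxD lt (\<lambda>x t. if P x then f x t else None) x = (if P x then maxD lt f x else None)"
  by (simp add: maxD_def)

lemma maxD_neq_NoneD: "maxD lt f x \<noteq> None \<Longrightarrow> \<exists>t. f x t \<noteq> None"
  by (auto simp: maxD_def Let_def split: if_splits)

lemma maxD_eq_Some_iff:
  assumes asym: "asymp lt" and tr: "transp lt" and mono: "mono_seq lt (f x)"
  shows "maxD lt f x = Some m \<longleftrightarrow> greatest_in lt {d. \<exists>t. f x t = Some d} m"
proof -
  define S where "S = {d. \<exists>t. f x t = Some d}"
  have the_greatest: "(THE m. m \<in> S \<and> (\<forall>d\<in>S. d = m \<or> lt d m)) = m" if "greatest_in lt S m" for m
    using that greatest_in_unique[OF asym, of S] by (auto simp: greatest_in_def)
  have "finite S \<and> S \<noteq> {} \<longleftrightarrow> (\<exists>m. greatest_in lt S m)"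
  proof
    assume "finite S \<and> S \<noteq> {}"
    moreover have "\<forall>u\<in>S. \<forall>v\<in>S. u = v \<or> lt u v \<or> lt v u"
    proof (intro ballI)
      fix u v assume "u \<in> S" "v \<in> S"
      then obtain s t where "f x s = Some u" "f x t = Some v" unfolding S_def by blast
      then show "u = v \<or> lt u v \<or> lt v u"
        using mono nat_le_linear[of s t] unfolding mono_seq_def by blast
    qed
    ultimately show "\<exists>m. greatest_in lt S m" using finite_chain_has_greatest[OF tr] by blast
  next
    assume "\<exists>m. greatest_in lt S m"
    then obtain m s where m: "greatest_in lt S m" and s: "f x s = Some m"
      unfolding greatest_in_def S_def by blast
    have "S \<subseteq> insert m ((\<lambda>t. the (f x t)) ` {..<s})"
    proof
      fix d assume "d \<in> S"
      then obtain t where t: "f x t = Some d" unfolding S_def by blast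
      show "d \<in> insert m ((\<lambda>t. the (f x t)) ` {..<s})"
      proof (cases "t < s")
        case False
        then have "s \<le> t" by simp
        then have "m = d \<or> lt m d" using mono s t unfolding mono_seq_def by blast
        then have "d = m" using m \<open>d \<in> S\<close> asympD[OF asym]
          unfolding greatest_in_def by blast
        then show ?thesis by simp
      qed (use t in force)
    qed
    then show "finite S \<and> S \<noteq> {}" using finite_subset m unfolding greatest_in_def by blast
  qed
  then show ?thesis
    unfolding maxD_def Let_def S_def[symmetric]
    using the_greatest greatest_in_unique[OF asym, of S] by auto
qed

lemma greatest_in_cofinal_iff:
  assumes asym: "asymp lt" and tr: "transp lt" and "S' \<subseteq> S"
    and cofinal: "\<forall>d\<in>S. \<exists>d'\<in>S'. d = d' \<or> lt d d'"
  shows "greatest_in lt S' m \<longleftrightarrow> greatest_in lt S m"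
proof
  assume "greatest_in lt S' m"
  then show "greatest_in lt S m"
    using assms(3) cofinal tr unfolding greatest_in_def by (metis subsetD transpD)
next
  assume m: "greatest_in lt S m"
  then obtain d' where "d' \<in> S'" and "m = d' \<or> lt m d'" using cofinal unfolding greatest_in_def by blast
  moreover from this have "d' = m" using m assms(3) asympD[OF asym]
    unfolding greatest_in_def by blast
  ultimately show "greatest_in lt S' m" using m assms(3) unfolding greatest_in_def by blast
qed

lemma maxD_cofinal:
  assumes asym: "asymp lt" and tr: "transp lt"
    and mono: "mono_seq lt (f x)" "mono_seq lt (g x)"
    and sub: "\<forall>t d. g x t = Some d \<longrightarrow> (\<exists>s. f x s = Some d)"
    and cofinal: "\<forall>s d. f x s = Some d \<longrightarrow> (\<exists>t d'. g x t = Some d' \<and> (d = d' \<or> lt d d'))"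
  shows "maxD lt g x = maxD lt f x"
proof -
  let ?S = "{d. \<exists>s. f x s = Some d}" and ?S' = "{d. \<exists>t. g x t = Some d}"
  have "?S' \<subseteq> ?S" and "\<forall>d\<in>?S. \<exists>d'\<in>?S'. d = d' \<or> lt d d'" using sub cofinal by blast+
  then have "greatest_in lt ?S' m \<longleftrightarrow> greatest_in lt ?S m" for m
    by (rule greatest_in_cofinal_iff[OF asym tr])
  then have eq: "maxD lt g x = Some m \<longleftrightarrow> maxD lt f x = Some m" for m
    by (simp add: maxD_eq_Some_iff[where f = f and x = x, OF asym tr mono(1)]
        maxD_eq_Some_iff[where f = g and x = x, OF asym tr mono(2)])
  show ?thesis
  proof (cases "maxD lt f x")
    case None
    then show ?thesis using eq[of "the (maxD lt g x)"] by (cases "maxD lt g x") simp_all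
  qed (use eq in simp)
qed

lemma maxD_normal_seq:
  assumes asym: "asymp lt" and tr: "transp lt" and "surj \<rho>"
    and computes: "\<forall>s y. eval r [prod_encode (e, s)] y \<longleftrightarrow> f x s = Some (\<rho> y)"
    and mono: "mono_seq lt (f x)"
    and g: "\<forall>t. g x t = map_option \<rho> (normal_seq r e t)"
  shows "mono_seq lt (g x)" and "maxD lt g x = maxD lt f x"
proof -
  show mono_g: "mono_seq lt (g x)"
    unfolding mono_seq_def
  proof (intro allI impI)
    fix t1 t2 u v assume "t1 \<le> t2" and "g x t1 = Some u" and "g x t2 = Some v"
    then obtain y1 y2 where "u = \<rho> y1" "v = \<rho> y2" and
      "\<exists>s1 s2. s1 \<le> s2 \<and> eval r [prod_encode (e, s1)] y1 \<and> eval r [prod_encode (e, s2)] y2"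
      using g normal_seq_order by fastforce
    then show "u = v \<or> lt u v" using computes mono unfolding mono_seq_def by blast
  qed
  have "\<forall>t d. g x t = Some d \<longrightarrow> (\<exists>s. f x s = Some d)"
    using g computes normal_seq_SomeD by fastforce
  moreover have "\<exists>t d'. g x t = Some d' \<and> (d = d' \<or> lt d d')" if "f x s = Some d" for s d
  proof -
    obtain y where "d = \<rho> y" using \<open>surj \<rho>\<close> by (metis surjD)
    then have "eval r [prod_encode (e, s)] y" using computes that by simp
    then obtain t s' y' where "s \<le> s'" "normal_seq r e t = Some y'" "eval r [prod_encode (e, s')] y'"
      using normal_seq_cofinal by blast
    then show ?thesis using g computes mono that unfolding mono_seq_def by fastforce
  qed
  ultimately show "maxD lt g x = maxD lt f x"
    using maxD_cofinal[where f = f and g = g and x = x, OF asym tr mono mono_g] by blast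
qed

lemma computable_normal_form:
  assumes asym: "asymp lt" and tr: "transp lt" and "bij \<rho>"
    and "pcomp2 X \<rho> f0" and "mono2 X lt f0"
  obtains f Z where "pcomp2 X \<rho> f" and "mono2 X lt f" and "\<forall>x\<in>elems X. maxD lt f x = maxD lt f0 x"
    and "sigma01 X Z" and "\<forall>x\<in>elems X. \<forall>t. f x t \<noteq> None \<longleftrightarrow> x \<in> Z"
proof -
  obtain r where r: "\<forall>x\<in>elems X. \<forall>s y. eval r [prod_encode (enc x, s)] y \<longleftrightarrow> f0 x s = Some (\<rho> y)"
    using assms(4) unfolding pcomp2_def by auto
  define f where "f x t = map_option \<rho> (normal_seq r (enc x) t)" for x t
  define Z where "Z = {x\<in>elems X. \<exists>s y. eval r [prod_encode (enc x, s)] y}"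
  have "inj \<rho>" and "surj \<rho>" using \<open>bij \<rho>\<close> by (simp_all add: bij_is_inj bij_is_surj)
  have dom: "(\<exists>y. eval (first_stage_rf r) [e] y) \<longleftrightarrow> (\<exists>s y. eval r [prod_encode (e, s)] y)" for e
  proof -
    have "(\<exists>y. eval (first_stage_rf r) [e] y) \<longleftrightarrow> normal_seq r e 0 \<noteq> None"
      by (simp add: eval_first_stage_rf_iff normal_seq_def)
    then show ?thesis by (simp only: normal_seq_defined_iff)
  qed
  have "pcomp2 X \<rho> f"
    unfolding pcomp2_def f_def using \<open>inj \<rho>\<close>
    by (auto intro!: exI[of _ "normal_seq_rf r"] simp: eval_normal_seq_rf_iff inj_eq)
  moreover have "mono_seq lt (f x) \<and> maxD lt f x = maxD lt f0 x" if "x \<in> elems X" for x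
    using maxD_normal_seq[where f = f0 and g = f and x = x and r = r and e = "enc x", OF asym tr \<open>surj \<rho>\<close>]
      r assms(5) that by (simp add: mono2_iff_mono_seq f_def)
  moreover have "\<forall>x\<in>elems X. \<forall>t. f x t \<noteq> None \<longleftrightarrow> x \<in> Z"
    unfolding f_def Z_def option.map_disc_iff normal_seq_defined_iff by simp
  moreover have "sigma01 X Z"
    unfolding sigma01_def by (intro conjI exI[of _ "first_stage_rf r"]) (auto simp: Z_def dom)
  ultimately show thesis
    using that[of f Z] by (simp add: mono2_iff_mono_seq)
qed

lemma pcomp2_restrict:
  assumes "pcomp2 X \<rho> f" and "sigma01 X D"
  shows "pcomp2 X \<rho> (\<lambda>x t. if x \<in> D then f x t else None)"
proof -
  obtain R where R: "\<forall>x\<in>elems X. \<forall>t y. eval R [enc (VP x (VN t))] y \<longleftrightarrow> f x t = Some (\<rho> y)"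
    using assms(1) unfolding pcomp2_def by blast
  obtain P where P: "\<forall>x\<in>elems X. x \<in> D \<longleftrightarrow> (\<exists>y. eval P [enc x] y)"
    using assms(2) unfolding sigma01_def by blast
  show ?thesis
    unfolding pcomp2_def using R P by (auto intro!: exI[of _ "restrict_rf P R"] simp: eval_restrict_rf_iff)
qed

theorem mainTheorem14:
  fixes X :: bspace and lt :: "'d \<Rightarrow> 'd \<Rightarrow> bool" and \<rho> :: "nat \<Rightarrow> 'd"
    and F :: "val \<Rightarrow> 'd option"
  assumes "irreflp lt" and "transp lt" and "bij \<rho>" and "computable_order lt \<rho>"
    and "MaxPR X lt \<rho> F"
  shows "(\<exists>f Z. pcomp2 X \<rho> f \<and> mono2 X lt f \<and> (\<forall>x\<in>elems X. F x = maxD lt f x)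
              \<and> sigma01 X Z \<and> (\<forall>x\<in>elems X. \<forall>t. f x t \<noteq> None \<longleftrightarrow> x \<in> Z))
       \<and> (sigma01 X {x\<in>elems X. F x \<noteq> None} \<longrightarrow>
           (\<exists>f. pcomp2 X \<rho> f \<and> mono2 X lt f \<and> (\<forall>x\<in>elems X. F x = maxD lt f x)
              \<and> (\<forall>x\<in>elems X. \<forall>t. f x t \<noteq> None \<longleftrightarrow> F x \<noteq> None)))"
proof -
  have "asymp lt" using assms(1,2) by (simp add: asymp_on_iff_irreflp_on_if_transp_on)
  obtain f0 where "pcomp2 X \<rho> f0" and "mono2 X lt f0" and "\<forall>x\<in>elems X. F x = maxD lt f0 x"
    using assms(5) unfolding MaxPR_def by blast
  then obtain f Z where f: "pcomp2 X \<rho> f" "mono2 X lt f" and F: "\<forall>x\<in>elems X. F x = maxD lt f x"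
    and "sigma01 X Z" and dom: "\<forall>x\<in>elems X. \<forall>t. f x t \<noteq> None \<longleftrightarrow> x \<in> Z"
    using computable_normal_form[OF \<open>asymp lt\<close> assms(2,3)] by metis
  moreover have "\<exists>g. pcomp2 X \<rho> g \<and> mono2 X lt g \<and> (\<forall>x\<in>elems X. F x = maxD lt g x)
      \<and> (\<forall>x\<in>elems X. \<forall>t. g x t \<noteq> None \<longleftrightarrow> F x \<noteq> None)"
    if D: "sigma01 X {x\<in>elems X. F x \<noteq> None}"
  proof (intro exI conjI)
    let ?g = "\<lambda>x t. if x \<in> {x\<in>elems X. F x \<noteq> None} then f x t else None"
    show "pcomp2 X \<rho> ?g" using pcomp2_restrict[OF f(1) D] .
    show "mono2 X lt ?g" using f(2) unfolding mono2_def by simp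
    show "\<forall>x\<in>elems X. F x = maxD lt ?g x" using F by (simp add: maxD_restrict)
    have "x \<in> Z" if "x \<in> elems X" and "F x \<noteq> None" for x
      using F dom that maxD_neq_NoneD by metis
    then show "\<forall>x\<in>elems X. \<forall>t. ?g x t \<noteq> None \<longleftrightarrow> F x \<noteq> None" using dom by auto
  qed
  ultimately show ?thesis by blast
qed

end
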